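(* Let $A$ and $B$ be tridendriform algebras over a field $\mathbb{K}$. Define three bilinear products on $A\otimes B$ by $$(a\otimes b)\prec(c\otimes d)=(a*c)\otimes(b\prec d),\quad (a\otimes b)\cdot(c\otimes d)=(a*c)\otimes(b\cdot d),\quad (a\otimes b)\succ(c\otimes d)=(a*c)\otimes(b\succ d)$$ for $a,c\in A$, $b,d\in B$. Then $(A\otimes B,\prec,\cdot,\succ)$ is a tridendriform algebra.
   Context: A tridendriform algebra over $\mathbb{K}$ is a vector space $A$ with three bilinear products $\prec,\cdot,\succ$ such that, writing $a*b=a\prec b+a\cdot b+a\succ b$, for all $a,b,c\in A$: $(a\prec b)\prec c=a\prec(b*c)$, $(a\succ b)\prec c=a\succ(b\prec c)$, $(a*b)\succ c=a\succ(b\succ c)$, $(a\succ b)\cdot c=a\succ(b\cdot c)$, $(a\prec b)\cdot c=a\cdot(b\succ c)$, $(a\cdot b)\prec c=a\cdot(b\prec c)$, $(a\cdot b)\cdot c=a\cdot(b\cdot c)$. (These imply that $*$ is associative.) In the claim, $a*c$ denotes this associative product of $A$. *)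

theory Defs
  imports Complex_Main
begin

definition bilinear_map ::
  "('k::field \<Rightarrow> 'a::ab_group_add \<Rightarrow> 'a) \<Rightarrow> ('k \<Rightarrow> 'b::ab_group_add \<Rightarrow> 'b)
   \<Rightarrow> ('k \<Rightarrow> 'c::ab_group_add \<Rightarrow> 'c) \<Rightarrow> ('a \<Rightarrow> 'b \<Rightarrow> 'c) \<Rightarrow> bool" where
  "bilinear_map s1 s2 s3 f \<longleftrightarrow>
     (\<forall>x. Vector_Spaces.linear s2 s3 (f x)) \<and> (\<forall>y. Vector_Spaces.linear s1 s3 (\<lambda>x. f x y))"

definition tri_star :: "('a \<Rightarrow> 'a \<Rightarrow> 'a::plus) \<Rightarrow> ('a \<Rightarrow> 'a \<Rightarrow> 'a) \<Rightarrow> ('a \<Rightarrow> 'a \<Rightarrow> 'a)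
    \<Rightarrow> 'a \<Rightarrow> 'a \<Rightarrow> 'a" where
  "tri_star l d r a b = l a b + d a b + r a b"

text \<open>Tridendriform algebra: a vector space with three bilinear products
  l (\<prec>), d (\<cdot>), r (\<succ>) satisfying the seven axioms.\<close>
definition tridendriform ::
  "('k::field \<Rightarrow> 'a::ab_group_add \<Rightarrow> 'a) \<Rightarrow> ('a \<Rightarrow> 'a \<Rightarrow> 'a) \<Rightarrow> ('a \<Rightarrow> 'a \<Rightarrow> 'a)
   \<Rightarrow> ('a \<Rightarrow> 'a \<Rightarrow> 'a) \<Rightarrow> bool" where
  "tridendriform s l d r \<longleftrightarrow>
     vector_space s \<and> bilinear_map s s s l \<and> bilinear_map s s s d \<and> bilinear_map s s s r \<and>
     (\<forall>a b c.
        l (l a b) c = l a (tri_star l d r b c) \<and>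
        l (r a b) c = r a (l b c) \<and>
        r (tri_star l d r a b) c = r a (r b c) \<and>
        d (r a b) c = r a (d b c) \<and>
        d (l a b) c = d a (r b c) \<and>
        l (d a b) c = d a (l b c) \<and>
        d (d a b) c = d a (d b c))"

text \<open>(T, t) is a tensor product of the vector spaces A and B over the field 'k:
  t is bilinear, the pure tensors span T, and t sends products of linearly
  independent sets injectively onto linearly independent sets (so that, for bases
  X, Y of A, B, the family t x y is a basis of T: the standard construction).\<close>
definition tensor_product ::
  "('k::field \<Rightarrow> 'a::ab_group_add \<Rightarrow> 'a) \<Rightarrow> ('k \<Rightarrow> 'b::ab_group_add \<Rightarrow> 'b)
   \<Rightarrow> ('k \<Rightarrow> 't::ab_group_add \<Rightarrow> 't) \<Rightarrow> ('a \<Rightarrow> 'b \<Rightarrow> 't) \<Rightarrow> bool" where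
  "tensor_product sA sB sT t \<longleftrightarrow>
     vector_space sA \<and> vector_space sB \<and> vector_space sT \<and>
     bilinear_map sA sB sT t \<and>
     module.span sT (case_prod t ` UNIV) = UNIV \<and>
     (\<forall>X Y. module.independent sA X \<and> module.independent sB Y \<longrightarrow>
        inj_on (case_prod t) (X \<times> Y) \<and> module.independent sT (case_prod t ` (X \<times> Y)))"

end

theory Submission
  imports Defs
begin

text \<open>The tensor product is spanned by pure tensors, and both sides of each tridendriform
  identity are trilinear, so it suffices to check the identities on pure tensors. There the
  first factor is multiplied by the associative product of A in every position, so each
  identity of the tensor product reduces to associativity in A together with the same
  identity in B.\<close>

definition tridendriform_identities ::
  "('a \<Rightarrow> 'a \<Rightarrow> 'a::plus) \<Rightarrow> ('a \<Rightarrow> 'a \<Rightarrow> 'a) \<Rightarrow> ('a \<Rightarrow> 'a \<Rightarrow> 'a) \<Rightarrow> 'a \<Rightarrow> 'a \<Rightarrow> 'a \<Rightarrow> bool" where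
  "tridendriform_identities l d r a b c \<longleftrightarrow>
     l (l a b) c = l a (tri_star l d r b c) \<and>
     l (r a b) c = r a (l b c) \<and>
     r (tri_star l d r a b) c = r a (r b c) \<and>
     d (r a b) c = r a (d b c) \<and>
     d (l a b) c = d a (r b c) \<and>
     l (d a b) c = d a (l b c) \<and>
     d (d a b) c = d a (d b c)"

lemma tridendriform_iff:
  "tridendriform s l d r \<longleftrightarrow>
     vector_space s \<and> bilinear_map s s s l \<and> bilinear_map s s s d \<and> bilinear_map s s s r \<and>
     (\<forall>a b c. tridendriform_identities l d r a b c)"
  unfolding tridendriform_def tridendriform_identities_def ..

definition trilinear_map :: "('k::field \<Rightarrow> 'v::ab_group_add \<Rightarrow> 'v) \<Rightarrow> ('v \<Rightarrow> 'v \<Rightarrow> 'v \<Rightarrow> 'v) \<Rightarrow> bool" where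
  "trilinear_map s F \<longleftrightarrow>
     (\<forall>y z. Vector_Spaces.linear s s (\<lambda>x. F x y z)) \<and>
     (\<forall>x z. Vector_Spaces.linear s s (\<lambda>y. F x y z)) \<and>
     (\<forall>x y. Vector_Spaces.linear s s (F x y))"

lemma bilinear_map_add:
  assumes "bilinear_map s1 s2 s3 f"
  shows "f (x + x') y = f x y + f x' y" and "f x (y + y') = f x y + f x y'"
  using assms unfolding bilinear_map_def Vector_Spaces.linear_iff by auto

lemma bilinear_map_tri_star:
  assumes "bilinear_map s1 s2 s3 l" "bilinear_map s1 s2 s3 d" "bilinear_map s1 s2 s3 r"
  shows "bilinear_map s1 s2 s3 (tri_star l d r)"
proof -
  have vs: "vector_space_pair s1 s3" "vector_space_pair s2 s3"
    using assms(1) unfolding bilinear_map_def Vector_Spaces.linear_iff vector_space_pair_def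
    by blast+
  show ?thesis
    using assms unfolding bilinear_map_def tri_star_def
    by (auto intro!: vector_space_pair.linear_compose_add[OF vs(1)]
        vector_space_pair.linear_compose_add[OF vs(2)])
qed

lemma trilinear_map_compose_left:
  assumes f: "bilinear_map s s s f" and g: "bilinear_map s s s g"
  shows "trilinear_map s (\<lambda>x y z. f (g x y) z)"
  using Vector_Spaces.linear_compose[of s s "\<lambda>x. g x _" s "\<lambda>u. f u _"]
    Vector_Spaces.linear_compose[of s s "g _" s "\<lambda>u. f u _"] f g
  unfolding trilinear_map_def bilinear_map_def o_def by blast

lemma trilinear_map_compose_right:
  assumes f: "bilinear_map s s s f" and g: "bilinear_map s s s g"
  shows "trilinear_map s (\<lambda>x y z. f x (g y z))"
  using Vector_Spaces.linear_compose[of s s "\<lambda>y. g y _" s "f _"]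
    Vector_Spaces.linear_compose[of s s "g _" s "f _"] f g
  unfolding trilinear_map_def bilinear_map_def o_def by blast

lemma trilinear_map_eq_on_spanning_set:
  assumes vs: "vector_space s" and span: "module.span s P = UNIV"
    and F: "trilinear_map s F" and G: "trilinear_map s G"
    and eq: "\<And>x y z. x \<in> P \<Longrightarrow> y \<in> P \<Longrightarrow> z \<in> P \<Longrightarrow> F x y z = G x y z"
  shows "F x y z = G x y z"
proof -
  interpret vector_space_pair s s
    using vs by (simp add: vector_space_pair_def)
  have eq1: "F x y z = G x y z" if "y \<in> P" "z \<in> P" for x y z
    using linear_eq_on[of "\<lambda>x. F x y z" "\<lambda>x. G x y z" x P] F G span eq that
    unfolding trilinear_map_def by auto
  have eq2: "F x y z = G x y z" if "z \<in> P" for x y z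
    using linear_eq_on[of "\<lambda>y. F x y z" "\<lambda>y. G x y z" y P] F G span eq1 that
    unfolding trilinear_map_def by auto
  show ?thesis
    using linear_eq_on[of "F x y" "G x y" z P] F G span eq2
    unfolding trilinear_map_def by auto
qed

lemma tridendriform_if_identities_on_spanning_set:
  assumes vs: "vector_space s" and span: "module.span s P = UNIV"
    and l: "bilinear_map s s s l" and d: "bilinear_map s s s d" and r: "bilinear_map s s s r"
    and identities: "\<And>a b c. a \<in> P \<Longrightarrow> b \<in> P \<Longrightarrow> c \<in> P \<Longrightarrow> tridendriform_identities l d r a b c"
  shows "tridendriform s l d r"
proof -
  have star: "bilinear_map s s s (tri_star l d r)"
    using l d r by (rule bilinear_map_tri_star)
  note eq = trilinear_map_eq_on_spanning_set[OF vs span]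
  note tri = trilinear_map_compose_left trilinear_map_compose_right
  note on_P = identities[unfolded tridendriform_identities_def]
  have "tridendriform_identities l d r a b c" for a b c
    unfolding tridendriform_identities_def
  proof (intro conjI)
    show "l (l a b) c = l a (tri_star l d r b c)"
      by (rule eq[where F = "\<lambda>a b c. l (l a b) c"]) (use on_P tri l star in auto)
    show "l (r a b) c = r a (l b c)"
      by (rule eq[where F = "\<lambda>a b c. l (r a b) c"]) (use on_P tri l r in auto)
    show "r (tri_star l d r a b) c = r a (r b c)"
      by (rule eq[where F = "\<lambda>a b c. r (tri_star l d r a b) c"]) (use on_P tri r star in auto)
    show "d (r a b) c = r a (d b c)"
      by (rule eq[where F = "\<lambda>a b c. d (r a b) c"]) (use on_P tri d r in auto)
    show "d (l a b) c = d a (r b c)"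
      by (rule eq[where F = "\<lambda>a b c. d (l a b) c"]) (use on_P tri l d r in auto)
    show "l (d a b) c = d a (l b c)"
      by (rule eq[where F = "\<lambda>a b c. l (d a b) c"]) (use on_P tri l d in auto)
    show "d (d a b) c = d a (d b c)"
      by (rule eq[where F = "\<lambda>a b c. d (d a b) c"]) (use on_P tri d in auto)
  qed
  then show ?thesis
    using vs l d r by (simp add: tridendriform_iff)
qed

lemma tri_star_assoc:
  assumes "tridendriform s l d r"
  shows "tri_star l d r (tri_star l d r a b) c = tri_star l d r a (tri_star l d r b c)"
proof -
  have l: "bilinear_map s s s l" and d: "bilinear_map s s s d" and r: "bilinear_map s s s r"
    and ax: "tridendriform_identities l d r a b c"
    using assms by (auto simp: tridendriform_iff)
  note add = bilinear_map_add[OF l] bilinear_map_add[OF d] bilinear_map_add[OF r]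
  have "tri_star l d r (tri_star l d r a b) c
      = l (tri_star l d r a b) c + d (tri_star l d r a b) c + r (tri_star l d r a b) c"
    by (simp add: tri_star_def)
  also have "l (tri_star l d r a b) c = l a (tri_star l d r b c) + d a (l b c) + r a (l b c)"
    using ax by (simp add: tridendriform_identities_def tri_star_def add)
  also have "d (tri_star l d r a b) c = d a (r b c) + d a (d b c) + r a (d b c)"
    using ax by (simp add: tridendriform_identities_def tri_star_def add)
  also have "r (tri_star l d r a b) c = r a (r b c)"
    using ax by (simp add: tridendriform_identities_def)
  finally show ?thesis
    by (simp add: tri_star_def add add_ac)
qed

theorem mainTheorem1:
  fixes sA :: "'k::field \<Rightarrow> 'a::ab_group_add \<Rightarrow> 'a"
    and sB :: "'k \<Rightarrow> 'b::ab_group_add \<Rightarrow> 'b"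
    and sT :: "'k \<Rightarrow> 't::ab_group_add \<Rightarrow> 't"
    and lA dA rA :: "'a \<Rightarrow> 'a \<Rightarrow> 'a"
    and lB dB rB :: "'b \<Rightarrow> 'b \<Rightarrow> 'b"
    and lT dT rT :: "'t \<Rightarrow> 't \<Rightarrow> 't"
    and t :: "'a \<Rightarrow> 'b \<Rightarrow> 't"
  assumes A: "tridendriform sA lA dA rA"
    and B: "tridendriform sB lB dB rB"
    and T: "tensor_product sA sB sT t"
    and bl: "bilinear_map sT sT sT lT"
    and bd: "bilinear_map sT sT sT dT"
    and br: "bilinear_map sT sT sT rT"
    and l_def: "\<And>a b c d. lT (t a b) (t c d) = t (tri_star lA dA rA a c) (lB b d)"
    and d_def: "\<And>a b c d. dT (t a b) (t c d) = t (tri_star lA dA rA a c) (dB b d)"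
    and r_def: "\<And>a b c d. rT (t a b) (t c d) = t (tri_star lA dA rA a c) (rB b d)"
  shows "tridendriform sT lT dT rT"
proof (rule tridendriform_if_identities_on_spanning_set[OF _ _ bl bd br])
  show "vector_space sT" and "module.span sT (case_prod t ` UNIV) = UNIV"
    using T unfolding tensor_product_def by auto
  have t: "bilinear_map sA sB sT t"
    using T unfolding tensor_product_def by auto
  have star_pure: "tri_star lT dT rT (t a b) (t c d) = t (tri_star lA dA rA a c) (tri_star lB dB rB b d)"
    for a b c d
    by (simp add: tri_star_def l_def d_def r_def bilinear_map_add(2)[OF t])
  have B_identities: "tridendriform_identities lB dB rB b d f" for b d f
    using B by (simp add: tridendriform_iff)
  show "tridendriform_identities lT dT rT x y z"
    if "x \<in> case_prod t ` UNIV" "y \<in> case_prod t ` UNIV" "z \<in> case_prod t ` UNIV" for x y z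
    using that B_identities
    by (auto simp: tridendriform_identities_def l_def d_def r_def star_pure tri_star_assoc[OF A])
qed

end
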